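(* Let $1\le h\le n$, $B=(b_{i,j})\in\Theta_\vartriangle(n,r)$ and $\lambda=\mathrm{ro}(B)$. (1) If $\varepsilon\in\{1,-1\}$ and $\lambda_{h+\varepsilon}\ge1$, then $$[E^\vartriangle_{h,h+\varepsilon}+\mathrm{diag}(\lambda-\mathbf e_{h+\varepsilon})]_1[B]_1=\sum_{i\in\mathbb Z,\ b_{h+\varepsilon,i}\ge1}(b_{h,i}+1)[B+E^\vartriangle_{h,i}-E^\vartriangle_{h+\varepsilon,i}]_1.$$ (2) If $m\in\mathbb Z\setminus\{0\}$ and $\lambda_h\ge1$, then $$[E^\vartriangle_{h,h+mn}+\mathrm{diag}(\lambda-\mathbf e_h)]_1[B]_1=\sum_{s\in\mathbb Z,\ b_{h,s}\ge1}(b_{h,s+mn}+1)[B+E^\vartriangle_{h,s+mn}-E^\vartriangle_{h,s}]_1.$$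
   Context: Fix $n\ge2$, $r\ge1$. $I_\vartriangle(n,r)$ is the set of integer sequences $\mathbf i=(i_k)_{k\in\mathbb Z}$ with $i_{k+r}=i_k+n$. $\Omega_{\mathbb Q}^{\otimes r}$ is the $\mathbb Q$-space with basis $\omega_{\mathbf i}$ ($\mathbf i\in I_\vartriangle(n,r)$), with right action of the affine symmetric group $\mathfrak S_{\vartriangle,r}$ (bijections $w:\mathbb Z\to\mathbb Z$, $w(k+r)=w(k)+r$) given by $\omega_{\mathbf i}w=\omega_{\mathbf iw}$, $(\mathbf iw)_k=i_{w(k)}$; $\mathcal S_\vartriangle(n,r)_{\mathbb Q}=\mathrm{End}_{\mathbb Q\mathfrak S_{\vartriangle,r}}(\Omega_{\mathbb Q}^{\otimes r})$ with composition as product. $\Theta_\vartriangle(n,r)$ is the set of matrices $A=(a_{k,l})_{k,l\in\mathbb Z}$ over $\mathbb N$ with $a_{k+n,l+n}=a_{k,l}$, finitely many nonzero entries per row, and $\sum_{1\le k\le n,\,l}a_{k,l}=r$; $\mathrm{ro}(A)=(\sum_la_{k,l})_{k\in\mathbb Z}$. For $\mathbf i,\mathbf j\in I_\vartriangle(n,r)$ let $M(\mathbf i,\mathbf j)=(a_{k,l})$ with $a_{k,l}=|\{s\in\mathbb Z\mid i_s=k,\ j_s=l\}|$; $[A]_1$ is the map $\omega_{\mathbf j}\mapsto\sum_{\mathbf i:\,M(\mathbf i,\mathbf j)=A}\omega_{\mathbf i}$, and $[A]_1:=0$ if $A$ has a negative entry. $E^\vartriangle_{i,j}$ has $1$ at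 positions $(i+sn,j+sn)$, $s\in\mathbb Z$, and $0$ elsewhere; $\mathbf e_h$ is the $n$-periodic unit vector; $\mathrm{diag}(\mu)$ is the diagonal matrix with entries $\mu_i$; indices are read mod $n$ where relevant. *)

theory Defs
  imports Complex_Main
begin

definition Idelta :: "nat \<Rightarrow> nat \<Rightarrow> (int \<Rightarrow> int) set" where
  "Idelta n r = {i. \<forall>k. i (k + int r) = i k + int n}"

text \<open>Vectors of Omega_Q^{tensor r}: finitely supported coefficient functions on the
  basis omega_i, i in Idelta n r.\<close>
definition Omega :: "nat \<Rightarrow> nat \<Rightarrow> ((int \<Rightarrow> int) \<Rightarrow> rat) set" where
  "Omega n r = {v. finite {j. v j \<noteq> 0} \<and> {j. v j \<noteq> 0} \<subseteq> Idelta n r}"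

definition Mmat :: "(int \<Rightarrow> int) \<Rightarrow> (int \<Rightarrow> int) \<Rightarrow> int \<Rightarrow> int \<Rightarrow> int" where
  "Mmat i j = (\<lambda>k l. int (card {s. i s = k \<and> j s = l}))"

definition ro :: "(int \<Rightarrow> int \<Rightarrow> int) \<Rightarrow> int \<Rightarrow> int" where
  "ro A = (\<lambda>k. \<Sum>l\<in>{l. A k l \<noteq> 0}. A k l)"

definition Theta :: "nat \<Rightarrow> nat \<Rightarrow> (int \<Rightarrow> int \<Rightarrow> int) set" where
  "Theta n r = {A. (\<forall>k l. A (k + int n) (l + int n) = A k l) \<and> (\<forall>k l. 0 \<le> A k l)
      \<and> (\<forall>k. finite {l. A k l \<noteq> 0}) \<and> (\<Sum>k\<in>{1..int n}. ro A k) = int r}"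

definition Edelta :: "nat \<Rightarrow> int \<Rightarrow> int \<Rightarrow> int \<Rightarrow> int \<Rightarrow> int" where
  "Edelta n i j = (\<lambda>k l. if \<exists>s::int. k = i + s * int n \<and> l = j + s * int n then 1 else 0)"

definition evec :: "nat \<Rightarrow> int \<Rightarrow> int \<Rightarrow> int" where
  "evec n h = (\<lambda>k. if k mod int n = h mod int n then 1 else 0)"

definition diagm :: "(int \<Rightarrow> int) \<Rightarrow> int \<Rightarrow> int \<Rightarrow> int" where
  "diagm \<mu> = (\<lambda>k l. if k = l then \<mu> k else 0)"

text \<open>The map [A]_1 on Omega: omega_j |-> sum of omega_i with M(i,j) = A,
  extended linearly; it is 0 if A has a negative entry.\<close>
definition stdmap :: "nat \<Rightarrow> nat \<Rightarrow> (int \<Rightarrow> int \<Rightarrow> int) \<Rightarrow> ((int \<Rightarrow> int) \<Rightarrow> rat) \<Rightarrow> ((int \<Rightarrow> int) \<Rightarrow> rat)" where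
  "stdmap n r A v = (\<lambda>i. if (\<forall>k l. 0 \<le> A k l) \<and> i \<in> Idelta n r
      then (\<Sum>j\<in>{j. v j \<noteq> 0}. if Mmat i j = A then v j else 0) else 0)"

end

theory Submission
  imports Defs "HOL-Library.FuncSet"
begin

text \<open>
  Evaluated at a coordinate \<open>w\<close> of the image of a basis vector \<open>\<omega>\<^sub>j\<close>, the product
  \<open>[A]\<^sub>1[B]\<^sub>1\<close> counts the sequences \<open>k\<close> with \<open>M(w,k) = A\<close> and \<open>M(k,j) = B\<close>. For
  \<open>A = E\<^sub>h\<^sub>,\<^sub>h\<^sub>+\<^sub>d + diag(\<lambda> - e\<^sub>h\<^sub>+\<^sub>d)\<close> such a \<open>k\<close> is \<open>w\<close> with its values on one residue class
  \<open>s\<^sub>0 + r\<int>\<close> with \<open>w\<^sub>s\<^sub>0 \<equiv> h (mod n)\<close> raised by \<open>d\<close>; then \<open>M(k,j) = B\<close>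
  says that \<open>M(w,j)\<close> arises from \<open>B\<close> by moving one unit from entry \<open>(h+d,l)\<close> to entry \<open>(h,l)\<close>.
  As \<open>d \<noteq> 0\<close>, the column \<open>l\<close> is determined by \<open>M(w,j)\<close>, and the admissible classes \<open>s\<^sub>0\<close> are
  counted by the \<open>(h,l)\<close> entry of \<open>M(w,j)\<close>, which is \<open>b\<^sub>h\<^sub>,\<^sub>l + 1\<close>. Part (2) is the case
  \<open>d = mn\<close>, reindexed by periodicity.
\<close>

lemma periodic_add_mult:
  fixes g :: "int \<Rightarrow> 'a"
  assumes "\<And>x. g (x + c) = g x"
  shows "g (x + q * c) = g x"
proof (induction q arbitrary: x rule: int_induct[where k = 0])
  case base
  show ?case by simp
next
  case (step1 q)
  show ?case using step1(2)[of x] assms[of "x + q * c"] by (simp add: algebra_simps)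
next
  case (step2 q)
  show ?case using step2(2)[of x] assms[of "x + (q - 1) * c"] by (simp add: algebra_simps)
qed

lemma additive_add_mult:
  fixes f :: "int \<Rightarrow> int"
  assumes "\<And>x. f (x + c) = f x + e"
  shows "f (x + q * c) = f x + q * e"
proof (induction q arbitrary: x rule: int_induct[where k = 0])
  case base
  show ?case by simp
next
  case (step1 q)
  show ?case using step1(2)[of x] assms[of "x + q * c"] by (simp add: algebra_simps)
next
  case (step2 q)
  show ?case using step2(2)[of x] assms[of "x + (q - 1) * c"] by (simp add: algebra_simps)
qed

lemma Idelta_add_mult:
  assumes "i \<in> Idelta n r"
  shows "i (s + q * int r) = i s + q * int n"
  using additive_add_mult[of i "int r" "int n"] assms by (simp add: Idelta_def)

lemma Idelta_mod_div:
  assumes "i \<in> Idelta n r"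
  shows "i s = i (s mod int r) + (s div int r) * int n"
  using Idelta_add_mult[OF assms, of "s mod int r" "s div int r"] by simp

lemma Idelta_eqI:
  assumes "i \<in> Idelta n r" "k \<in> Idelta n r" "r > 0"
    and "\<And>s. s \<in> {0..<int r} \<Longrightarrow> i s = k s"
  shows "i = k"
proof
  fix s
  have "s mod int r \<in> {0..<int r}" using \<open>r > 0\<close> by simp
  then show "i s = k s"
    using Idelta_mod_div[OF assms(1), of s] Idelta_mod_div[OF assms(2), of s] assms(4) by simp
qed

lemma Edelta_altdef:
  "Edelta n x y a b = (if int n dvd (a - x) \<and> b - y = a - x then 1 else 0)"
proof -
  have "(\<exists>s. a = x + s * int n \<and> b = y + s * int n) \<longleftrightarrow> int n dvd (a - x) \<and> b - y = a - x"
  proof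
    assume "int n dvd (a - x) \<and> b - y = a - x"
    then obtain s where "a - x = int n * s" "b - y = a - x" by (auto elim: dvdE)
    then show "\<exists>s. a = x + s * int n \<and> b = y + s * int n" by (auto simp: algebra_simps)
  qed auto
  then show ?thesis unfolding Edelta_def by simp
qed

lemma Edelta_self [simp]: "Edelta n x y x y = 1"
  by (simp add: Edelta_altdef)

lemma Edelta_cong:
  assumes "int n dvd (x - x')"
  shows "Edelta n x y = Edelta n x' (y - (x - x'))"
proof (intro ext)
  fix a b
  have "a - x' = (x - x') + (a - x)" by simp
  then have "int n dvd (a - x) \<longleftrightarrow> int n dvd (a - x')"
    using dvd_add_right_iff[OF assms] by presburger
  then show "Edelta n x y a b = Edelta n x' (y - (x - x')) a b"
    unfolding Edelta_altdef by auto
qed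

lemma evec_cong:
  assumes "int n dvd (x - x')"
  shows "evec n x = evec n x'"
  using assms unfolding evec_def by (metis mod_eq_dvd_iff)

lemma Mmat_eq_card:
  assumes i: "i \<in> Idelta n r" and j: "j \<in> Idelta n r" and n: "n > 0" and r: "r > 0"
  shows "Mmat i j a b = int (card {s \<in> {0..<int r}. int n dvd (a - i s) \<and> b - j s = a - i s})"
proof -
  let ?C = "\<lambda>s. int n dvd (a - i s) \<and> b - j s = a - i s"
  have "bij_betw (\<lambda>s. s mod int r) {s. i s = a \<and> j s = b} {s \<in> {0..<int r}. ?C s}"
  proof (rule bij_betwI')
    fix s s' assume s: "s \<in> {s. i s = a \<and> j s = b}" and s': "s' \<in> {s. i s = a \<and> j s = b}"
    show "(s mod int r = s' mod int r) = (s = s')"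
    proof
      assume eq: "s mod int r = s' mod int r"
      have "a = i (s' mod int r) + (s div int r) * int n" "a = i (s' mod int r) + (s' div int r) * int n"
        using Idelta_mod_div[OF i, of s] Idelta_mod_div[OF i, of s'] s s' eq by simp_all
      then have "(s div int r) * int n = (s' div int r) * int n" by linarith
      then have "s div int r = s' div int r" using n by auto
      then show "s = s'" using eq by (metis mod_div_mult_eq)
    qed simp
  next
    fix s assume "s \<in> {s. i s = a \<and> j s = b}"
    then show "s mod int r \<in> {s \<in> {0..<int r}. ?C s}"
      using Idelta_mod_div[OF i, of s] Idelta_mod_div[OF j, of s] r
      by (auto simp: algebra_simps intro: dvdI[of _ _ "s div int r"])
  next
    fix y assume y: "y \<in> {s \<in> {0..<int r}. ?C s}"
    then obtain q where q: "a - i y = int n * q" and bj: "b - j y = a - i y" by (auto elim: dvdE)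
    have "i (y + q * int r) = a" "j (y + q * int r) = b"
      using Idelta_add_mult[OF i, of y q] Idelta_add_mult[OF j, of y q] q bj by (simp_all add: algebra_simps)
    moreover have "(y + q * int r) mod int r = y" using y by simp
    ultimately show "\<exists>x \<in> {s. i s = a \<and> j s = b}. y = x mod int r" by force
  qed
  then show ?thesis unfolding Mmat_def by (simp add: bij_betw_same_card)
qed

lemma Mmat_eq_sum_Edelta:
  assumes "i \<in> Idelta n r" "j \<in> Idelta n r" "n > 0" "r > 0"
  shows "Mmat i j a b = (\<Sum>s \<in> {0..<int r}. Edelta n (i s) (j s) a b)"
  unfolding Mmat_eq_card[OF assms] Edelta_altdef by (simp add: sum.inter_filter[symmetric])

lemma Edelta_le_Mmat:
  assumes "i \<in> Idelta n r" "j \<in> Idelta n r" "n > 0" "r > 0" "s \<in> {0..<int r}"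
  shows "Edelta n (i s) (j s) a b \<le> Mmat i j a b"
  unfolding Mmat_eq_sum_Edelta[OF assms(1-4)]
  by (rule member_le_sum[OF assms(5)]) (auto simp: Edelta_altdef)

lemma ro_Mmat_eq_sum_evec:
  assumes i: "i \<in> Idelta n r" and j: "j \<in> Idelta n r" and n: "n > 0" and r: "r > 0"
  shows "ro (Mmat i j) a = (\<Sum>s \<in> {0..<int r}. evec n (i s) a)"
proof -
  let ?P = "{0..<int r}"
  let ?Z = "(\<lambda>s. j s + (a - i s)) ` ?P"
  have "{b. Mmat i j a b \<noteq> 0} \<subseteq> ?Z"
  proof
    fix b assume "b \<in> {b. Mmat i j a b \<noteq> 0}"
    then obtain s where "s \<in> ?P" "Edelta n (i s) (j s) a b \<noteq> 0"
      using Mmat_eq_sum_Edelta[OF i j n r] by (metis (mono_tags, lifting) mem_Collect_eq sum.neutral)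
    then show "b \<in> ?Z" by (auto simp: Edelta_altdef split: if_splits intro!: image_eqI[where x = s])
  qed
  then have "ro (Mmat i j) a = (\<Sum>b \<in> ?Z. \<Sum>s \<in> ?P. Edelta n (i s) (j s) a b)"
    unfolding ro_def Mmat_eq_sum_Edelta[OF i j n r, symmetric]
    by (intro sum.mono_neutral_left) auto
  also have "\<dots> = (\<Sum>s \<in> ?P. \<Sum>b \<in> ?Z. Edelta n (i s) (j s) a b)" by (rule sum.swap)
  also have "\<dots> = (\<Sum>s \<in> ?P. evec n (i s) a)"
  proof (rule sum.cong[OF refl])
    fix s assume "s \<in> ?P"
    then have "(\<Sum>b \<in> ?Z. Edelta n (i s) (j s) a b)
        = (\<Sum>b \<in> ?Z. if b = j s + (a - i s) then (if int n dvd (a - i s) then 1 else 0) else 0)"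
      by (intro sum.cong) (auto simp: Edelta_altdef)
    also have "\<dots> = evec n (i s) a"
      using \<open>s \<in> ?P\<close> by (simp add: evec_def mod_eq_dvd_iff)
    finally show "(\<Sum>b \<in> ?Z. Edelta n (i s) (j s) a b) = evec n (i s) a" .
  qed
  finally show ?thesis .
qed

lemma Mmat_self:
  assumes "i \<in> Idelta n r" "n > 0" "r > 0"
  shows "Mmat i i a b = (if a = b then (\<Sum>s \<in> {0..<int r}. evec n (i s) a) else 0)"
  unfolding Mmat_eq_sum_Edelta[OF assms(1,1-3)]
  by (auto simp: Edelta_altdef evec_def mod_eq_dvd_iff intro!: sum.cong)

lemma Theta_add_mult:
  assumes "B \<in> Theta n r"
  shows "B (k + q * int n) (l + q * int n) = B k l"
proof -
  have "\<forall>k l. B (k + int n) (l + int n) = B k l" using assms by (simp add: Theta_def)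
  then have "B (k + (t + int n)) (l + (t + int n)) = B (k + t) (l + t)" for t
    using spec2[OF \<open>\<forall>k l. _\<close>, of "k + t" "l + t"] by (simp add: add.assoc)
  then show ?thesis using periodic_add_mult[of "\<lambda>t. B (k + t) (l + t)" "int n" 0 q] by simp
qed

lemma Theta_finite_row:
  assumes "B \<in> Theta n r"
  shows "finite {l. 1 \<le> B k l}"
proof (rule rev_finite_subset)
  show "finite {l. B k l \<noteq> 0}" using assms by (simp add: Theta_def)
qed auto

lemma Theta_finite_column:
  assumes B: "B \<in> Theta n r" and n: "n > 0"
  shows "finite {a. B a l \<noteq> 0}"
proof (rule finite_subset)
  let ?U = "\<Union>c \<in> {0..<int n}. (\<lambda>l'. c + (l - l')) ` {l'. B c l' \<noteq> 0}"
  show "{a. B a l \<noteq> 0} \<subseteq> ?U"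
  proof
    fix a assume a: "a \<in> {a. B a l \<noteq> 0}"
    let ?c = "a mod int n" and ?q = "a div int n"
    have "B ?c (l - ?q * int n) = B (?c + ?q * int n) (l - ?q * int n + ?q * int n)"
      by (rule Theta_add_mult[OF B, symmetric])
    then have "l - ?q * int n \<in> {l'. B ?c l' \<noteq> 0}" using a by simp
    moreover have "a = ?c + (l - (l - ?q * int n))" "?c \<in> {0..<int n}" using n by simp_all
    ultimately show "a \<in> ?U" by (intro UN_I image_eqI)
  qed
  have "finite {l'. B c l' \<noteq> 0}" for c using B by (simp add: Theta_def)
  then show "finite ?U" by simp
qed

definition bump :: "(int \<Rightarrow> int) \<Rightarrow> nat \<Rightarrow> int \<Rightarrow> int \<Rightarrow> int \<Rightarrow> int" where
  "bump i r d s0 = (\<lambda>s. if s mod int r = s0 then i s + d else i s)"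

lemma bump_Idelta: "i \<in> Idelta n r \<Longrightarrow> bump i r d s0 \<in> Idelta n r"
  unfolding Idelta_def bump_def by auto

lemma bump_apply: "s \<in> {0..<int r} \<Longrightarrow> bump i r d s0 s = (if s = s0 then i s + d else i s)"
  unfolding bump_def by simp

lemma inj_on_bump:
  assumes "d \<noteq> 0"
  shows "inj_on (bump i r d) {0..<int r}"
proof (rule inj_onI)
  fix s0 s1 assume "s0 \<in> {0..<int r}" and "bump i r d s0 = bump i r d s1"
  then have "i s0 + d = (if s0 = s1 then i s0 + d else i s0)"
    by (metis bump_apply)
  then show "s0 = s1" using assms by (auto split: if_splits)
qed

lemma sum_update_one:
  fixes g :: "int \<Rightarrow> 'a::ab_group_add"
  assumes "finite P" "s0 \<in> P" "\<And>s. s \<in> P \<Longrightarrow> s \<noteq> s0 \<Longrightarrow> g s = f s"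
  shows "sum g P = sum f P - f s0 + g s0"
  using sum.remove[OF assms(1,2), of g] sum.remove[OF assms(1,2), of f] assms(3)
    sum.cong[of "P - {s0}" "P - {s0}" g f]
  by auto

definition raise_mat :: "nat \<Rightarrow> (int \<Rightarrow> int) \<Rightarrow> int \<Rightarrow> int \<Rightarrow> int \<Rightarrow> int \<Rightarrow> int" where
  "raise_mat n \<mu> h d = (\<lambda>k l. Edelta n h (h + d) k l + diagm (\<lambda>t. \<mu> t - evec n (h + d) t) k l)"

definition move_entry :: "nat \<Rightarrow> (int \<Rightarrow> int \<Rightarrow> int) \<Rightarrow> int \<Rightarrow> int \<Rightarrow> int \<Rightarrow> int \<Rightarrow> int \<Rightarrow> int" where
  "move_entry n B h d l = (\<lambda>k l'. B k l' + Edelta n h l k l' - Edelta n (h + d) l k l')"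

lemma move_entry_inj:
  assumes "d \<noteq> 0" and "move_entry n B h d l = move_entry n B h d l'"
  shows "l = l'"
proof (rule ccontr)
  assume "l \<noteq> l'"
  then have "move_entry n B h d l h l = B h l + 1" "move_entry n B h d l' h l \<le> B h l"
    using assms(1) by (simp_all add: move_entry_def Edelta_altdef)
  then show False using assms(2) by simp
qed

lemma Mmat_bump_left:
  assumes i: "i \<in> Idelta n r" and j: "j \<in> Idelta n r" and n: "n > 0" and r: "r > 0"
    and s0: "s0 \<in> {0..<int r}" and h: "int n dvd (i s0 - h)"
  shows "Mmat (bump i r d s0) j a b
    = Mmat i j a b - Edelta n h (j s0 - (i s0 - h)) a b + Edelta n (h + d) (j s0 - (i s0 - h)) a b"
proof -
  have "Mmat (bump i r d s0) j a b = Mmat i j a b - Edelta n (i s0) (j s0) a b + Edelta n (i s0 + d) (j s0) a b"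
    unfolding Mmat_eq_sum_Edelta[OF bump_Idelta[OF i] j n r] Mmat_eq_sum_Edelta[OF i j n r]
    using sum_update_one[OF _ s0, of "\<lambda>s. Edelta n (bump i r d s0 s) (j s) a b"] s0
    by (simp add: bump_apply)
  moreover have "Edelta n (i s0) (j s0) = Edelta n h (j s0 - (i s0 - h))"
    using Edelta_cong[OF h] .
  moreover have "Edelta n (i s0 + d) (j s0) = Edelta n (h + d) (j s0 - (i s0 - h))"
    using Edelta_cong[of n "i s0 + d" "h + d"] h by simp
  ultimately show ?thesis by simp
qed

lemma Mmat_bump_right:
  assumes i: "i \<in> Idelta n r" and j: "j \<in> Idelta n r" and n: "n > 0" and r: "r > 0"
    and s0: "s0 \<in> {0..<int r}" and h: "int n dvd (i s0 - h)"
  shows "Mmat i (bump i r d s0) = raise_mat n (ro (Mmat (bump i r d s0) j)) h d"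
proof (intro ext)
  fix a b
  let ?k = "bump i r d s0"
  have "ro (Mmat ?k j) a = (\<Sum>s \<in> {0..<int r}. evec n (i s) a) - evec n (i s0) a + evec n (i s0 + d) a"
    unfolding ro_Mmat_eq_sum_evec[OF bump_Idelta[OF i] j n r]
    using sum_update_one[OF _ s0, of "\<lambda>s. evec n (?k s) a"] s0 by (simp add: bump_apply)
  also have "\<dots> = (\<Sum>s \<in> {0..<int r}. evec n (i s) a) - evec n h a + evec n (h + d) a"
    using evec_cong[OF h] evec_cong[of n "i s0 + d" "h + d"] h by simp
  finally have ro: "ro (Mmat ?k j) a = \<dots>" .
  have "Mmat i ?k a b = Mmat i i a b - Edelta n (i s0) (i s0) a b + Edelta n (i s0) (i s0 + d) a b"
    unfolding Mmat_eq_sum_Edelta[OF i bump_Idelta[OF i] n r] Mmat_eq_sum_Edelta[OF i i n r]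
    using sum_update_one[OF _ s0, of "\<lambda>s. Edelta n (i s) (?k s) a b"] s0
    by (simp add: bump_apply)
  also have "\<dots> = Mmat i i a b - Edelta n h h a b + Edelta n h (h + d) a b"
    using Edelta_cong[OF h, of "i s0"] Edelta_cong[OF h, of "i s0 + d"] by (simp add: add.commute)
  also have "\<dots> = raise_mat n (ro (Mmat ?k j)) h d a b"
    unfolding raise_mat_def diagm_def Mmat_self[OF i n r] ro
    by (auto simp: Edelta_altdef evec_def mod_eq_dvd_iff)
  finally show "Mmat i ?k a b = raise_mat n (ro (Mmat ?k j)) h d a b" .
qed

lemma Mmat_eq_raise_matD:
  assumes n: "n > 0" and r: "r > 0" and d: "d \<noteq> 0"
    and i: "i \<in> Idelta n r" and k: "k \<in> Idelta n r" and ik: "Mmat i k = raise_mat n \<mu> h d"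
  shows "\<exists>s0 \<in> {0..<int r}. int n dvd (i s0 - h) \<and> k = bump i r d s0"
proof -
  let ?P = "{0..<int r}"
  let ?R = "{s \<in> ?P. int n dvd (h - i s) \<and> h + d - k s = h - i s}"
  have "Mmat i k h (h + d) = 1" using ik d by (simp add: raise_mat_def diagm_def)
  then have "card ?R = 1" using Mmat_eq_card[OF i k n r, of h "h + d"] by simp
  then obtain s0 where R: "?R = {s0}" by (rule card_1_singletonE)
  then have "s0 \<in> ?R" by simp
  then have s0: "s0 \<in> ?P" "int n dvd (i s0 - h)" "k s0 = i s0 + d"
    by (simp_all add: dvd_diff_commute)
  have moved: "s = s0" if s: "s \<in> ?P" "k s \<noteq> i s" for s
  proof -
    have "1 \<le> Mmat i k (i s) (k s)"
      using Edelta_le_Mmat[OF i k n r s(1), of "i s" "k s"] by simp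
    then have "1 \<le> Edelta n h (h + d) (i s) (k s)"
      using ik s(2) by (simp add: raise_mat_def diagm_def)
    then have "int n dvd (h - i s)" "h + d - k s = h - i s"
      by (auto simp: Edelta_altdef dvd_diff_commute split: if_splits)
    then have "s \<in> ?R" using s(1) by blast
    then show ?thesis using R by blast
  qed
  have "k = bump i r d s0"
  proof (rule Idelta_eqI[OF k bump_Idelta[OF i] r])
    fix s assume s: "s \<in> ?P"
    show "k s = bump i r d s0 s"
    proof (cases "s = s0")
      case True
      then show ?thesis using s s0(3) by (simp add: bump_apply)
    next
      case False
      then show ?thesis using s moved[OF s] by (auto simp: bump_apply)
    qed
  qed
  then show ?thesis using s0 by blast
qed

lemma Mmat_factorization_iff:
  assumes n: "n > 0" and r: "r > 0" and d: "d \<noteq> 0"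
    and i: "i \<in> Idelta n r" and j: "j \<in> Idelta n r" and k: "k \<in> Idelta n r"
  shows "Mmat i k = raise_mat n (ro B) h d \<and> Mmat k j = B \<longleftrightarrow>
    (\<exists>s0 \<in> {0..<int r}. int n dvd (i s0 - h) \<and> k = bump i r d s0
      \<and> Mmat i j = move_entry n B h d (j s0 - (i s0 - h)))"
proof -
  have bump_left: "Mmat (bump i r d s0) j = B \<longleftrightarrow> Mmat i j = move_entry n B h d (j s0 - (i s0 - h))"
    if "s0 \<in> {0..<int r}" "int n dvd (i s0 - h)" for s0
    using Mmat_bump_left[OF i j n r that, of d] unfolding move_entry_def
    by (auto simp: fun_eq_iff algebra_simps)
  show ?thesis
  proof
    assume "Mmat i k = raise_mat n (ro B) h d \<and> Mmat k j = B"
    then show "\<exists>s0 \<in> {0..<int r}. int n dvd (i s0 - h) \<and> k = bump i r d s0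
      \<and> Mmat i j = move_entry n B h d (j s0 - (i s0 - h))"
      using Mmat_eq_raise_matD[OF n r d i k] bump_left by metis
  next
    assume "\<exists>s0 \<in> {0..<int r}. int n dvd (i s0 - h) \<and> k = bump i r d s0
      \<and> Mmat i j = move_entry n B h d (j s0 - (i s0 - h))"
    then show "Mmat i k = raise_mat n (ro B) h d \<and> Mmat k j = B"
      using bump_left Mmat_bump_right[OF i j n r] by metis
  qed
qed

lemma card_factorizations:
  assumes n: "n > 0" and r: "r > 0" and d: "d \<noteq> 0"
    and i: "i \<in> Idelta n r" and j: "j \<in> Idelta n r" and fin: "finite {l. 1 \<le> B (h + d) l}"
  shows "int (card {k \<in> Idelta n r. Mmat i k = raise_mat n (ro B) h d \<and> Mmat k j = B})
    = (\<Sum>l \<in> {l. 1 \<le> B (h + d) l}. (B h l + 1) * (if Mmat i j = move_entry n B h d l then 1 else 0))"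
proof -
  let ?P = "{0..<int r}"
  let ?Q = "{s0 \<in> ?P. int n dvd (i s0 - h) \<and> Mmat i j = move_entry n B h d (j s0 - (i s0 - h))}"
  have "{k \<in> Idelta n r. Mmat i k = raise_mat n (ro B) h d \<and> Mmat k j = B} = bump i r d ` ?Q"
    using Mmat_factorization_iff[OF n r d i j] bump_Idelta[OF i] by blast
  moreover have "inj_on (bump i r d) ?Q"
    using inj_on_bump[OF d] by (rule inj_on_subset) auto
  ultimately have card: "card {k \<in> Idelta n r. Mmat i k = raise_mat n (ro B) h d \<and> Mmat k j = B} = card ?Q"
    by (simp add: card_image)
  show ?thesis
  proof (cases "\<exists>l0. Mmat i j = move_entry n B h d l0")
    case False
    then show ?thesis unfolding card by (auto intro: sum.neutral)
  next
    case True
    then obtain l0 where l0: "Mmat i j = move_entry n B h d l0" ..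
    have only_l0: "Mmat i j = move_entry n B h d l \<longleftrightarrow> l = l0" for l
      using l0 move_entry_inj[OF d] by metis
    have "?Q = {s \<in> ?P. int n dvd (h - i s) \<and> l0 - j s = h - i s}"
      by (auto simp: only_l0 dvd_diff_commute)
    then have "int (card ?Q) = Mmat i j h l0"
      using Mmat_eq_card[OF i j n r, of h l0] by simp
    also have "\<dots> = B h l0 + 1"
      using l0 d by (simp add: move_entry_def Edelta_altdef)
    finally have "int (card ?Q) = B h l0 + 1" .
    moreover have "0 \<le> Mmat i j (h + d) l0" by (simp add: Mmat_def)
    then have "l0 \<in> {l. 1 \<le> B (h + d) l}"
      using l0 d by (simp add: move_entry_def Edelta_altdef)
    ultimately show ?thesis
      unfolding card only_l0 using fin by (simp add: if_distrib[of "\<lambda>x. _ * x"] cong: if_cong)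
  qed
qed

lemma finite_Mmat_preimage:
  assumes n: "n > 0" and r: "r > 0" and B: "B \<in> Theta n r" and j: "j \<in> Idelta n r"
  shows "finite {k \<in> Idelta n r. Mmat k j = B}"
proof (rule inj_on_finite[where f = "\<lambda>k. restrict k {0..<int r}"])
  show "inj_on (\<lambda>k. restrict k {0..<int r}) {k \<in> Idelta n r. Mmat k j = B}"
    by (rule inj_onI) (metis (mono_tags, lifting) Idelta_eqI mem_Collect_eq r restrict_apply')
  show "(\<lambda>k. restrict k {0..<int r}) ` {k \<in> Idelta n r. Mmat k j = B}
      \<subseteq> PiE {0..<int r} (\<lambda>s. {a. B a (j s) \<noteq> 0})"
  proof (intro subsetI)
    fix f assume "f \<in> (\<lambda>k. restrict k {0..<int r}) ` {k \<in> Idelta n r. Mmat k j = B}"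
    then obtain k where k: "k \<in> Idelta n r" "Mmat k j = B" and f: "f = restrict k {0..<int r}" by blast
    have "B (k s) (j s) \<noteq> 0" if s: "s \<in> {0..<int r}" for s
      using Edelta_le_Mmat[OF k(1) j n r s, of "k s" "j s"] k(2) by simp
    then show "f \<in> PiE {0..<int r} (\<lambda>s. {a. B a (j s) \<noteq> 0})" using f by auto
  qed
  show "finite (PiE {0..<int r} (\<lambda>s. {a. B a (j s) \<noteq> 0}))"
    by (rule finite_PiE) (auto intro: Theta_finite_column[OF B n])
qed

text \<open>If \<open>C\<close> has a negative entry, both sides vanish because \<open>Mmat\<close> is nonnegative.\<close>
lemma stdmap_apply:
  assumes "w \<in> Idelta n r"
  shows "stdmap n r C v w = (\<Sum>j \<in> {j. v j \<noteq> 0}. if Mmat w j = C then v j else 0)"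
proof (cases "\<forall>k l. 0 \<le> C k l")
  case False
  then have "Mmat w j \<noteq> C" for j by (auto simp: Mmat_def)
  then show ?thesis by (simp add: stdmap_def)
qed (simp add: stdmap_def assms)

lemma stdmap_stdmap:
  assumes v: "v \<in> Omega n r" and w: "w \<in> Idelta n r"
    and fin: "\<And>j. j \<in> Idelta n r \<Longrightarrow> finite {k \<in> Idelta n r. Mmat k j = B}"
  shows "stdmap n r A (stdmap n r B v) w
    = (\<Sum>j \<in> {j. v j \<noteq> 0}. v j * of_nat (card {k \<in> Idelta n r. Mmat w k = A \<and> Mmat k j = B}))"
proof -
  define V where "V = {j. v j \<noteq> 0}"
  define U where "U = (\<Union>j \<in> V. {k \<in> Idelta n r. Mmat k j = B})"
  define u where "u = stdmap n r B v"
  have V: "finite V" "V \<subseteq> Idelta n r" using v unfolding V_def Omega_def by auto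
  have "finite U" unfolding U_def using V fin by (intro finite_UN_I) auto
  have u: "u k = (\<Sum>j \<in> V. if Mmat k j = B then v j else 0)" if "k \<in> Idelta n r" for k
    using stdmap_apply[OF that] unfolding u_def V_def .
  have "{k. u k \<noteq> 0} \<subseteq> U"
  proof
    fix k assume "k \<in> {k. u k \<noteq> 0}"
    moreover from this have k: "k \<in> Idelta n r" by (rule contrapos_pp) (simp add: u_def stdmap_def)
    ultimately have "(\<Sum>j \<in> V. if Mmat k j = B then v j else 0) \<noteq> 0" using u[OF k] by simp
    then obtain j where "j \<in> V" "(if Mmat k j = B then v j else 0) \<noteq> 0" by (rule sum.not_neutral_contains_not_neutral)
    then show "k \<in> U" using k unfolding U_def by (auto split: if_splits)
  qed
  then have "stdmap n r A u w = (\<Sum>k \<in> U. if Mmat w k = A then u k else 0)"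
    unfolding stdmap_apply[OF w] by (intro sum.mono_neutral_left[OF \<open>finite U\<close>]) auto
  also have "\<dots> = (\<Sum>k \<in> U. \<Sum>j \<in> V. if Mmat w k = A \<and> Mmat k j = B then v j else 0)"
  proof (rule sum.cong[OF refl])
    fix k assume "k \<in> U"
    then have "k \<in> Idelta n r" unfolding U_def by blast
    then show "(if Mmat w k = A then u k else 0) = (\<Sum>j \<in> V. if Mmat w k = A \<and> Mmat k j = B then v j else 0)"
      by (cases "Mmat w k = A") (simp_all add: u)
  qed
  also have "\<dots> = (\<Sum>j \<in> V. \<Sum>k \<in> U. if Mmat w k = A \<and> Mmat k j = B then v j else 0)"
    by (rule sum.swap)
  also have "\<dots> = (\<Sum>j \<in> V. v j * of_nat (card {k \<in> Idelta n r. Mmat w k = A \<and> Mmat k j = B}))"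
  proof (rule sum.cong[OF refl])
    fix j assume "j \<in> V"
    then have "{k \<in> U. Mmat w k = A \<and> Mmat k j = B} = {k \<in> Idelta n r. Mmat w k = A \<and> Mmat k j = B}"
      unfolding U_def by blast
    then show "(\<Sum>k \<in> U. if Mmat w k = A \<and> Mmat k j = B then v j else 0)
        = v j * of_nat (card {k \<in> Idelta n r. Mmat w k = A \<and> Mmat k j = B})"
      unfolding sum.inter_filter[OF \<open>finite U\<close>, symmetric] by (simp add: mult.commute)
  qed
  finally show ?thesis unfolding u_def V_def .
qed

lemma stdmap_raise_mat:
  assumes n: "n > 0" and r: "r > 0" and B: "B \<in> Theta n r" and d: "d \<noteq> 0" and v: "v \<in> Omega n r"
  shows "stdmap n r (raise_mat n (ro B) h d) (stdmap n r B v)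
    = (\<lambda>w. \<Sum>l \<in> {l. 1 \<le> B (h + d) l}. of_int (B h l + 1) * stdmap n r (move_entry n B h d l) v w)"
proof
  fix w
  let ?L = "{l. 1 \<le> B (h + d) l}" and ?V = "{j. v j \<noteq> 0}"
  show "stdmap n r (raise_mat n (ro B) h d) (stdmap n r B v) w
    = (\<Sum>l \<in> ?L. of_int (B h l + 1) * stdmap n r (move_entry n B h d l) v w)"
  proof (cases "w \<in> Idelta n r")
    case False
    then show ?thesis by (simp add: stdmap_def)
  next
    case w: True
    let ?M = "\<lambda>l. move_entry n B h d l"
    have "of_nat (card {k \<in> Idelta n r. Mmat w k = raise_mat n (ro B) h d \<and> Mmat k j = B})
        = (of_int (\<Sum>l \<in> ?L. (B h l + 1) * (if Mmat w j = ?M l then 1 else 0)) :: rat)" if "j \<in> ?V" for j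
    proof -
      have "j \<in> Idelta n r" using v that by (auto simp: Omega_def)
      then have "int (card {k \<in> Idelta n r. Mmat w k = raise_mat n (ro B) h d \<and> Mmat k j = B})
          = (\<Sum>l \<in> ?L. (B h l + 1) * (if Mmat w j = ?M l then 1 else 0))"
        by (rule card_factorizations[OF n r d w _ Theta_finite_row[OF B]])
      from arg_cong[where f = "of_int :: int \<Rightarrow> rat", OF this] show ?thesis
        by (simp only: of_int_of_nat_eq)
    qed
    note card = this
    have "stdmap n r (raise_mat n (ro B) h d) (stdmap n r B v) w
        = (\<Sum>j \<in> ?V. v j * of_nat (card {k \<in> Idelta n r. Mmat w k = raise_mat n (ro B) h d \<and> Mmat k j = B}))"
      by (rule stdmap_stdmap[OF v w finite_Mmat_preimage[OF n r B]])
    also have "\<dots> = (\<Sum>j \<in> ?V. \<Sum>l \<in> ?L. of_int (B h l + 1) * (if Mmat w j = ?M l then v j else 0))"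
      using card by (simp add: sum_distrib_left mult.commute of_int_sum if_distrib cong: if_cong del: of_int_add)
    also have "\<dots> = (\<Sum>l \<in> ?L. of_int (B h l + 1) * stdmap n r (?M l) v w)"
      unfolding stdmap_apply[OF w] by (subst sum.swap) (simp add: sum_distrib_left)
    finally show ?thesis .
  qed
qed

lemma stdmap_raise_mat_period:
  assumes n: "n > 0" and r: "r > 0" and B: "B \<in> Theta n r" and m: "m \<noteq> 0" and v: "v \<in> Omega n r"
  shows "stdmap n r (\<lambda>k l. Edelta n h (h + m * int n) k l + diagm (\<lambda>t. ro B t - evec n h t) k l)
      (stdmap n r B v)
    = (\<lambda>w. \<Sum>s \<in> {s. 1 \<le> B h s}. of_int (B h (s + m * int n) + 1) *
        stdmap n r (\<lambda>k l. B k l + Edelta n h (s + m * int n) k l - Edelta n h s k l) v w)"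
proof -
  let ?d = "m * int n"
  let ?g = "\<lambda>w l. of_int (B h l + 1) * stdmap n r (move_entry n B h ?d l) v w"
  have "evec n (h + ?d) = evec n h" by (rule evec_cong) simp
  then have raise: "raise_mat n (ro B) h ?d
      = (\<lambda>k l. Edelta n h (h + ?d) k l + diagm (\<lambda>t. ro B t - evec n h t) k l)"
    by (simp add: raise_mat_def)
  have move: "move_entry n B h ?d (s + ?d) = (\<lambda>k l. B k l + Edelta n h (s + ?d) k l - Edelta n h s k l)" for s
    using Edelta_cong[of n "h + ?d" h "s + ?d"] by (simp add: move_entry_def)
  have shift: "B (h + ?d) l = B h (l - ?d)" for l
    using Theta_add_mult[OF B, of h m "l - ?d"] by simp
  have "bij_betw (\<lambda>s. s + ?d) {s. 1 \<le> B h s} {l. 1 \<le> B (h + ?d) l}"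
    by (rule bij_betwI[where g = "\<lambda>l. l - ?d"]) (auto simp: shift)
  then have "(\<Sum>l \<in> {l. 1 \<le> B (h + ?d) l}. ?g w l) = (\<Sum>s \<in> {s. 1 \<le> B h s}. ?g w (s + ?d))" for w
    by (rule sum.reindex_bij_betw[symmetric])
  moreover have "?d \<noteq> 0" using m n by simp
  ultimately show ?thesis
    using stdmap_raise_mat[OF n r B _ v, of ?d h] unfolding raise move by (simp add: shift)
qed

theorem proposition6p2p3:
  fixes n r :: nat and h :: int and B :: "int \<Rightarrow> int \<Rightarrow> int"
  assumes "n \<ge> 2" and "r \<ge> 1" and "1 \<le> h" and "h \<le> int n"
    and "B \<in> Theta n r"
  shows
   "(\<forall>\<epsilon>::int. (\<epsilon> = 1 \<or> \<epsilon> = -1) \<and> ro B (h + \<epsilon>) \<ge> 1 \<longrightarrow>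
      (\<forall>v \<in> Omega n r.
        stdmap n r (\<lambda>k l. Edelta n h (h + \<epsilon>) k l
                          + diagm (\<lambda>t. ro B t - evec n (h + \<epsilon>) t) k l)
          (stdmap n r B v)
        = (\<lambda>w. \<Sum>i\<in>{i. B (h + \<epsilon>) i \<ge> 1}.
              of_int (B h i + 1) *
              stdmap n r (\<lambda>k l. B k l + Edelta n h i k l - Edelta n (h + \<epsilon>) i k l) v w)))
    \<and>
    (\<forall>m::int. m \<noteq> 0 \<and> ro B h \<ge> 1 \<longrightarrow>
      (\<forall>v \<in> Omega n r.
        stdmap n r (\<lambda>k l. Edelta n h (h + m * int n) k l
                          + diagm (\<lambda>t. ro B t - evec n h t) k l)
          (stdmap n r B v)
        = (\<lambda>w. \<Sum>s\<in>{s. B h s \<ge> 1}.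
              of_int (B h (s + m * int n) + 1) *
              stdmap n r (\<lambda>k l. B k l + Edelta n h (s + m * int n) k l - Edelta n h s k l) v w)))"
proof -
  have n: "n > 0" and r: "r > 0" using assms(1,2) by auto
  note part1 = stdmap_raise_mat[OF n r assms(5), unfolded raise_mat_def move_entry_def]
  note part2 = stdmap_raise_mat_period[OF n r assms(5)]
  show ?thesis
    by (intro conjI allI impI ballI part1 part2) auto
qed

end
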